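(* Let $N$ be a finite set with $|N|\ge2$ and let $o\in\mathbb{R}^{\Upsilon}$ be an SE objective. Let $P'\subseteq\mathbb{R}^{\Upsilon}$ be the polyhedron specified by all inequalities $\langle o',\eta\rangle\le u'$ that define SE faces of $P_N$ (i.e. $o'$ is an SE objective and $\langle o',\eta\rangle\le u'$ is valid for all $\eta\in P_N$). Then the maximum of $\eta\mapsto\langle o,\eta\rangle$ over $P'$ equals its maximum over $P_N$.
   Context: $\mathrm{DAG}(N)$ is the set of acyclic directed graphs over $N$; $\mathrm{pa}_G(a)$ is the parent set of $a$ in $G$; $G\sim H$ (Markov equivalence) means same adjacencies and same immoralities (induced $a\to c\leftarrow b$ with $a,b$ non-adjacent). $\Upsilon=\{(a|B): a\in N,\ \emptyset\neq B\subseteq N\setminus\{a\}\}$; $\eta_G\in\mathbb{R}^{\Upsilon}$ has $\eta_G(a|B)=1$ if $B=\mathrm{pa}_G(a)$, else $0$; $P_N=\mathrm{conv}\{\eta_G:G\in\mathrm{DAG}(N)\}$. $o\in\mathbb{R}^{\Upsilon}$ is an SE objective if $\langle o,\eta_G\rangle=\langle o,\eta_H\rangle$ whenever $G\sim H$. *)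

theory Defs
  imports Complex_Main
begin

definition Ups :: "'a set \<Rightarrow> ('a \<times> 'a set) set" where
  "Ups N = {(a, B). a \<in> N \<and> B \<noteq> {} \<and> B \<subseteq> N - {a}}"

text \<open>Vectors in R^Upsilon: real functions on pairs vanishing outside Upsilon.\<close>
definition vecs :: "'a set \<Rightarrow> ('a \<times> 'a set \<Rightarrow> real) set" where
  "vecs N = {f. \<forall>x. x \<notin> Ups N \<longrightarrow> f x = 0}"

definition ip :: "'a set \<Rightarrow> ('a \<times> 'a set \<Rightarrow> real) \<Rightarrow> ('a \<times> 'a set \<Rightarrow> real) \<Rightarrow> real" where
  "ip N o' eta = (\<Sum>x\<in>Ups N. o' x * eta x)"

text \<open>Acyclic directed graphs over N, given by their arrow relation (b,a) meaning b -> a.\<close>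
definition DAG :: "'a set \<Rightarrow> ('a \<times> 'a) set set" where
  "DAG N = {G. G \<subseteq> N \<times> N \<and> acyclic G}"

definition pa :: "('a \<times> 'a) set \<Rightarrow> 'a \<Rightarrow> 'a set" where
  "pa G a = {b. (b, a) \<in> G}"

definition adj :: "('a \<times> 'a) set \<Rightarrow> 'a \<Rightarrow> 'a \<Rightarrow> bool" where
  "adj G a b \<longleftrightarrow> (a, b) \<in> G \<or> (b, a) \<in> G"

definition immoralities :: "('a \<times> 'a) set \<Rightarrow> ('a \<times> 'a \<times> 'a) set" where
  "immoralities G = {(a, c, b). (a, c) \<in> G \<and> (b, c) \<in> G \<and> a \<noteq> b \<and> \<not> adj G a b}"

definition markov_equiv :: "('a \<times> 'a) set \<Rightarrow> ('a \<times> 'a) set \<Rightarrow> bool" where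
  "markov_equiv G H \<longleftrightarrow> adj G = adj H \<and> immoralities G = immoralities H"

definition eta :: "'a set \<Rightarrow> ('a \<times> 'a) set \<Rightarrow> ('a \<times> 'a set \<Rightarrow> real)" where
  "eta N G = (\<lambda>(a, B). if (a, B) \<in> Ups N \<and> B = pa G a then 1 else 0)"

definition PN :: "'a set \<Rightarrow> ('a \<times> 'a set \<Rightarrow> real) set" where
  "PN N = {v. \<exists>w :: ('a \<times> 'a) set \<Rightarrow> real.
              (\<forall>G\<in>DAG N. w G \<ge> 0) \<and> (\<Sum>G\<in>DAG N. w G) = 1 \<and>
              v = (\<lambda>x. \<Sum>G\<in>DAG N. w G * eta N G x)}"

definition SE_objective :: "'a set \<Rightarrow> ('a \<times> 'a set \<Rightarrow> real) \<Rightarrow> bool" where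
  "SE_objective N o' \<longleftrightarrow> o' \<in> vecs N \<and>
     (\<forall>G\<in>DAG N. \<forall>H\<in>DAG N. markov_equiv G H \<longrightarrow> ip N o' (eta N G) = ip N o' (eta N H))"

definition Pprime :: "'a set \<Rightarrow> ('a \<times> 'a set \<Rightarrow> real) set" where
  "Pprime N = {v \<in> vecs N. \<forall>o' u'. SE_objective N o' \<and> (\<forall>y\<in>PN N. ip N o' y \<le> u')
                  \<longrightarrow> ip N o' v \<le> u'}"

definition is_max_on :: "'a set \<Rightarrow> ('a \<times> 'a set \<Rightarrow> real) \<Rightarrow> ('a \<times> 'a set \<Rightarrow> real) set \<Rightarrow> real \<Rightarrow> bool" where
  "is_max_on N o' S m \<longleftrightarrow> (\<exists>v\<in>S. ip N o' v = m) \<and> (\<forall>v\<in>S. ip N o' v \<le> m)"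

end

theory Submission
  imports Defs
begin

text \<open>Since P_N is contained in P', the maximum over P' is at least the maximum m over P_N,
  which is attained at some vertex eta_G. Conversely, o is itself an SE objective and
  the inequality <o, eta> <= m is valid for P_N, so it is one of the inequalities cutting
  out P'; hence m bounds o on P' as well.\<close>

lemma finite_DAG: "finite N \<Longrightarrow> finite (DAG N)"
proof -
  assume "finite N"
  have "DAG N \<subseteq> Pow (N \<times> N)" by (auto simp: DAG_def)
  then show ?thesis using \<open>finite N\<close> by (meson finite_Pow_iff finite_SigmaI finite_subset)
qed

lemma empty_in_DAG: "{} \<in> DAG N"
  by (simp add: DAG_def acyclic_def)

lemma ip_convex_combination:
  assumes "finite (DAG N)"
  shows "ip N o' (\<lambda>x. \<Sum>G\<in>DAG N. w G * eta N G x) = (\<Sum>G\<in>DAG N. w G * ip N o' (eta N G))"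
  unfolding ip_def
  by (simp add: sum_distrib_left sum.swap[of _ "Ups N"] mult.left_commute)

lemma PN_subset_vecs: "PN N \<subseteq> vecs N"
  by (auto simp: PN_def vecs_def eta_def)

lemma PN_subset_Pprime: "PN N \<subseteq> Pprime N"
  using PN_subset_vecs unfolding Pprime_def by auto

lemma eta_in_PN:
  assumes "finite (DAG N)" "G \<in> DAG N"
  shows "eta N G \<in> PN N"
proof -
  let ?w = "\<lambda>H. if H = G then 1 else (0::real)"
  have "(\<Sum>H\<in>DAG N. ?w H) = 1" using assms by (simp add: sum.delta)
  moreover have "eta N G x = (\<Sum>H\<in>DAG N. ?w H * eta N H x)" for x
  proof -
    have "(\<Sum>H\<in>DAG N. ?w H * eta N H x) = (\<Sum>H\<in>DAG N. if H = G then eta N H x else 0)"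
      by (rule sum.cong) auto
    also have "\<dots> = eta N G x" using assms by (simp add: sum.delta')
    finally show ?thesis by simp
  qed
  ultimately show ?thesis unfolding PN_def by (intro CollectI exI[of _ ?w]) auto
qed

lemma ip_PN_le:
  assumes "finite (DAG N)" and "\<And>G. G \<in> DAG N \<Longrightarrow> ip N o' (eta N G) \<le> m" and "v \<in> PN N"
  shows "ip N o' v \<le> m"
proof -
  obtain w where w: "\<forall>G\<in>DAG N. w G \<ge> 0" "(\<Sum>G\<in>DAG N. w G) = 1"
    "v = (\<lambda>x. \<Sum>G\<in>DAG N. w G * eta N G x)"
    using assms(3) unfolding PN_def by blast
  have "ip N o' v = (\<Sum>G\<in>DAG N. w G * ip N o' (eta N G))"
    using w(3) ip_convex_combination[OF assms(1)] by simp
  also have "\<dots> \<le> (\<Sum>G\<in>DAG N. w G * m)"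
    by (intro sum_mono mult_left_mono) (use w(1) assms(2) in auto)
  also have "\<dots> = m" using w(2) by (simp add: sum_distrib_right[symmetric])
  finally show ?thesis .
qed

lemma is_max_on_PN_exists:
  assumes "finite N"
  shows "\<exists>m. is_max_on N o' (PN N) m"
proof -
  have fin: "finite (DAG N)" using assms by (rule finite_DAG)
  define m where "m = Max ((\<lambda>G. ip N o' (eta N G)) ` DAG N)"
  have "m \<in> (\<lambda>G. ip N o' (eta N G)) ` DAG N"
    unfolding m_def using fin empty_in_DAG by (intro Max_in) auto
  then obtain G where G: "m = ip N o' (eta N G)" "G \<in> DAG N" by (rule imageE)
  have le: "ip N o' (eta N H) \<le> m" if "H \<in> DAG N" for H
    unfolding m_def using fin that by simp
  have "is_max_on N o' (PN N) m"
    unfolding is_max_on_def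
  proof
    show "\<exists>v\<in>PN N. ip N o' v = m"
      using G eta_in_PN[OF fin] by (intro bexI[of _ "eta N G"]) simp_all
    show "\<forall>v\<in>PN N. ip N o' v \<le> m"
      using ip_PN_le[OF fin le] by blast
  qed
  then show ?thesis ..
qed

lemma ip_Pprime_le:
  assumes "SE_objective N o'" and "\<And>y. y \<in> PN N \<Longrightarrow> ip N o' y \<le> u" and "v \<in> Pprime N"
  shows "ip N o' v \<le> u"
proof -
  have "\<forall>o'' u'. SE_objective N o'' \<and> (\<forall>y\<in>PN N. ip N o'' y \<le> u') \<longrightarrow> ip N o'' v \<le> u'"
    using assms(3) unfolding Pprime_def by blast
  then show ?thesis using assms(1,2) by blast
qed

lemma is_max_on_superset:
  assumes "is_max_on N o' S m" and "S \<subseteq> T" and "\<And>v. v \<in> T \<Longrightarrow> ip N o' v \<le> m"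
  shows "is_max_on N o' T m"
  using assms unfolding is_max_on_def by blast

theorem lemma12:
  fixes N :: "'a set" and o' :: "'a \<times> 'a set \<Rightarrow> real"
  assumes "finite N" and "card N \<ge> 2" and "SE_objective N o'"
  shows "\<exists>m. is_max_on N o' (Pprime N) m \<and> is_max_on N o' (PN N) m"
proof -
  obtain m where max_PN: "is_max_on N o' (PN N) m"
    using is_max_on_PN_exists[OF assms(1)] ..
  have "is_max_on N o' (Pprime N) m"
  proof (rule is_max_on_superset[OF max_PN PN_subset_Pprime])
    have "ip N o' y \<le> m" if "y \<in> PN N" for y
      using max_PN that unfolding is_max_on_def by blast
    then show "ip N o' v \<le> m" if "v \<in> Pprime N" for v
      using ip_Pprime_le[OF assms(3) _ that] by blast
  qed
  with max_PN show ?thesis by blast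
qed

end
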